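(* Let $k$ be a field, $A=kQ_A/I_A$ a monomial algebra with vertices $e_1,\dots,e_n$, and $B$ the algebra obtained from $A$ by gluing the distinct non-isolated vertices $e_1,e_n$. Then $$\dim_k\mathrm{Im}(\delta^0_A)=\dim_k\mathrm{Im}(\delta^0_B)+1+c_B-c_A-\mathrm{sp}(1,n).$$ In particular, if $e_1,e_n$ lie in the same block of $A$, then $\dim_k\mathrm{Im}(\delta^0_A)=\dim_k\mathrm{Im}(\delta^0_B)+1-\mathrm{sp}(1,n)$; if they lie in different blocks, then $\dim_k\mathrm{Im}(\delta^0_A)=\dim_k\mathrm{Im}(\delta^0_B)$.
   Context: Monomial algebra: $A=kQ_A/I_A$, $Q_A$ finite quiver, $I_A$ admissible, generated by a minimal set $Z_A$ of paths of length $\ge2$; $\mathcal B_A$: paths (including trivial ones) avoiding $Z_A$ as subpaths, a basis of $A$. Gluing: $B\subseteq A$ generated by $f_1=e_1+e_n$, $f_i=e_i$ ($2\le i\le n-1$) and all arrows; $B\cong kQ_B/I_B$, $Q_B$ obtained from $Q_A$ by identifying $e_1,e_n$ to $f_1$ (arrow $\alpha\mapsto\alpha^*$, path $p=a_m\cdots a_1\mapsto p^*=a_m^*\cdots a_1^*$), $I_B$ generated by $\{r^*:r\in Z_A\}$ and the paths $b^*c^*$ with $b,c$ arrows, $t(c),s(b)\in\{e_1,e_n\}$, $t(c)\ne s(b)$; $\mathcal B_B$ its basis paths. $c_A,c_B$: numbers of connected components of $Q_A,Q_B$; blocks correspond to connected components. For path sets $X,Y$, $k(X\|Y)$ has basis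 the pairs $x\|y$ of parallel paths. For monomial $\Lambda=kQ/\langle Z\rangle$ with basis paths $\mathcal B$, $\delta^0:k(Q_0\|\mathcal B)\to k(Q_1\|\mathcal B)$, $e\|\gamma\mapsto\sum_{a\in Q_1,s(a)=e,a\gamma\in\mathcal B}a\|a\gamma-\sum_{a\in Q_1,t(a)=e,\gamma a\in\mathcal B}a\|\gamma a$; $\delta^0_A,\delta^0_B$ are these for $A,B$. A special path is a path $p\in\mathcal B_A$ from $e_1$ to $e_n$ or from $e_n$ to $e_1$ with $\delta^0_B(f_1\|p^* )\ne0$, equivalently such that $ap\notin I_A$ or $pa\notin I_A$ for some arrow $a$; $\mathrm{sp}(1,n)$ is the number of special paths. *)

theory Defs
  imports Main "HOL.Vector_Spaces" "HOL-Library.Sublist" "HOL-Library.Function_Algebras"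
begin

text \<open>A path is a pair (v, as): its starting vertex v and the list of its arrows in the order
in which they are traversed.  Thus the paper's path a_m...a_1 is (s a_1, [a_1,...,a_m]);
the trivial path at v is (v, []).\<close>

type_synonym ('v, 'e) path = "'v \<times> 'e list"

definition qpath_tgt :: "('e \<Rightarrow> 'v) \<Rightarrow> ('v, 'e) path \<Rightarrow> 'v" where
  "qpath_tgt t p = (if snd p = [] then fst p else t (last (snd p)))"

definition is_qpath :: "'v set \<Rightarrow> 'e set \<Rightarrow> ('e \<Rightarrow> 'v) \<Rightarrow> ('e \<Rightarrow> 'v) \<Rightarrow> ('v, 'e) path \<Rightarrow> bool" where
  "is_qpath Q0 Q1 s t p \<longleftrightarrow>
     fst p \<in> Q0 \<and> set (snd p) \<subseteq> Q1 \<and>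
     (snd p \<noteq> [] \<longrightarrow> s (hd (snd p)) = fst p) \<and>
     (\<forall>i. Suc i < length (snd p) \<longrightarrow> t (snd p ! i) = s (snd p ! Suc i))"

definition quiver :: "'v set \<Rightarrow> 'e set \<Rightarrow> ('e \<Rightarrow> 'v) \<Rightarrow> ('e \<Rightarrow> 'v) \<Rightarrow> bool" where
  "quiver Q0 Q1 s t \<longleftrightarrow> finite Q0 \<and> finite Q1 \<and> (\<forall>a\<in>Q1. s a \<in> Q0 \<and> t a \<in> Q0)"

definition subpath :: "('v, 'e) path \<Rightarrow> ('v, 'e) path \<Rightarrow> bool" where
  "subpath r p \<longleftrightarrow> sublist (snd r) (snd p)"

text \<open>Basis paths of kQ/<Z>: paths avoiding every element of Z as a subpath.\<close>
definition basis_paths :: "'v set \<Rightarrow> 'e set \<Rightarrow> ('e \<Rightarrow> 'v) \<Rightarrow> ('e \<Rightarrow> 'v) \<Rightarrow> ('v, 'e) path set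
    \<Rightarrow> ('v, 'e) path set" where
  "basis_paths Q0 Q1 s t Z = {p. is_qpath Q0 Q1 s t p \<and> (\<forall>r\<in>Z. \<not> subpath r p)}"

text \<open>A monomial algebra kQ/I with I admissible, generated by a minimal set Z of paths of
length at least 2.  Admissibility (I contains all paths of length >= N for some N) is
expressed by: every path of length >= N contains an element of Z.\<close>
definition monomial_presentation ::
  "'v set \<Rightarrow> 'e set \<Rightarrow> ('e \<Rightarrow> 'v) \<Rightarrow> ('e \<Rightarrow> 'v) \<Rightarrow> ('v, 'e) path set \<Rightarrow> bool" where
  "monomial_presentation Q0 Q1 s t Z \<longleftrightarrow>
     quiver Q0 Q1 s t \<and>
     (\<forall>r\<in>Z. is_qpath Q0 Q1 s t r \<and> length (snd r) \<ge> 2) \<and>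
     (\<forall>r\<in>Z. \<forall>r'\<in>Z. subpath r r' \<longrightarrow> r = r') \<and>
     (\<exists>N. \<forall>p. is_qpath Q0 Q1 s t p \<and> length (snd p) \<ge> N \<longrightarrow> (\<exists>r\<in>Z. subpath r p))"

text \<open>Basis of k(Q0 || B): pairs (e, gamma) with gamma a basis path parallel to the trivial
path e, i.e. from e to e.\<close>
definition par0 :: "'v set \<Rightarrow> 'e set \<Rightarrow> ('e \<Rightarrow> 'v) \<Rightarrow> ('e \<Rightarrow> 'v) \<Rightarrow> ('v, 'e) path set
    \<Rightarrow> ('v \<times> ('v, 'e) path) set" where
  "par0 Q0 Q1 s t Z = {(e, \<gamma>). e \<in> Q0 \<and> \<gamma> \<in> basis_paths Q0 Q1 s t Z \<and>
                                fst \<gamma> = e \<and> qpath_tgt t \<gamma> = e}"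

text \<open>delta^0 on a basis element e || gamma, as a vector in k(Q1 || B) represented by its
coordinate function on pairs (a, p).  Here a gamma = (fst gamma, snd gamma @ [a]) and
gamma a = (s a, a # snd gamma).\<close>
definition delta0 :: "'v set \<Rightarrow> 'e set \<Rightarrow> ('e \<Rightarrow> 'v) \<Rightarrow> ('e \<Rightarrow> 'v) \<Rightarrow> ('v, 'e) path set
    \<Rightarrow> 'v \<times> ('v, 'e) path \<Rightarrow> 'e \<times> ('v, 'e) path \<Rightarrow> 'k::ring_1" where
  "delta0 Q0 Q1 s t Z x y =
     (case x of (e, \<gamma>) \<Rightarrow> case y of (a, p) \<Rightarrow>
        (if a \<in> Q1 \<and> s a = e \<and> p = (fst \<gamma>, snd \<gamma> @ [a]) \<and> p \<in> basis_paths Q0 Q1 s t Z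
         then 1 else 0)
      - (if a \<in> Q1 \<and> t a = e \<and> p = (s a, a # snd \<gamma>) \<and> p \<in> basis_paths Q0 Q1 s t Z
         then 1 else 0))"

definition fscale :: "'k::field \<Rightarrow> ('x \<Rightarrow> 'k) \<Rightarrow> ('x \<Rightarrow> 'k)" where
  "fscale c f = (\<lambda>x. c * f x)"

definition dim_im_delta0 :: "'k::field itself \<Rightarrow> 'v set \<Rightarrow> 'e set \<Rightarrow> ('e \<Rightarrow> 'v) \<Rightarrow> ('e \<Rightarrow> 'v)
    \<Rightarrow> ('v, 'e) path set \<Rightarrow> nat" where
  "dim_im_delta0 (K :: 'k itself) Q0 Q1 s t Z =
     vector_space.dim (fscale :: 'k \<Rightarrow> _)
       ((\<lambda>x. (delta0 Q0 Q1 s t Z x :: _ \<Rightarrow> 'k)) ` par0 Q0 Q1 s t Z)"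

definition conn_rel :: "'e set \<Rightarrow> ('e \<Rightarrow> 'v) \<Rightarrow> ('e \<Rightarrow> 'v) \<Rightarrow> ('v \<times> 'v) set" where
  "conn_rel Q1 s t = ({(s a, t a) | a. a \<in> Q1} \<union> {(t a, s a) | a. a \<in> Q1})\<^sup>*"

definition ncomp :: "'v set \<Rightarrow> 'e set \<Rightarrow> ('e \<Rightarrow> 'v) \<Rightarrow> ('e \<Rightarrow> 'v) \<Rightarrow> nat" where
  "ncomp Q0 Q1 s t = card (Q0 // conn_rel Q1 s t)"

text \<open>Gluing v1 and vn: vn is identified with v1 (which plays the role of f_1).\<close>
definition glue :: "'v \<Rightarrow> 'v \<Rightarrow> 'v \<Rightarrow> 'v" where
  "glue v1 vn x = (if x = vn then v1 else x)"

definition glue_rels :: "'e set \<Rightarrow> ('e \<Rightarrow> 'v) \<Rightarrow> ('e \<Rightarrow> 'v) \<Rightarrow> ('v, 'e) path set \<Rightarrow> 'v \<Rightarrow> 'v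
    \<Rightarrow> ('v, 'e) path set" where
  "glue_rels Q1 s t Z v1 vn =
     {(glue v1 vn (fst r), snd r) | r. r \<in> Z} \<union>
     {(glue v1 vn (s c), [c, b]) | b c. b \<in> Q1 \<and> c \<in> Q1 \<and> t c \<in> {v1, vn} \<and>
                                      s b \<in> {v1, vn} \<and> t c \<noteq> s b}"

text \<open>Special paths: basis paths p of A from v1 to vn or from vn to v1 with
delta^0_B(f_1 || p*) nonzero (the coefficients are 0, 1, -1; computed in int).\<close>
definition special_paths :: "'v set \<Rightarrow> 'e set \<Rightarrow> ('e \<Rightarrow> 'v) \<Rightarrow> ('e \<Rightarrow> 'v) \<Rightarrow> ('v, 'e) path set
    \<Rightarrow> 'v \<Rightarrow> 'v \<Rightarrow> ('v, 'e) path set" where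
  "special_paths Q0 Q1 s t Z v1 vn =
     {p \<in> basis_paths Q0 Q1 s t Z.
        ((fst p = v1 \<and> qpath_tgt t p = vn) \<or> (fst p = vn \<and> qpath_tgt t p = v1)) \<and>
        (delta0 (glue v1 vn ` Q0) Q1 (glue v1 vn \<circ> s) (glue v1 vn \<circ> t)
            (glue_rels Q1 s t Z v1 vn) (v1, (v1, snd p)) :: _ \<Rightarrow> int) \<noteq> 0}"

end

theory Submission
  imports Defs
begin

text \<open>Im \<delta>^0 is spanned by the images of the trivial paths, supported on the pairs a || a,
  and of the cycles, supported on longer pairs. A basis path of B with at least one arrow is
  just a basis path of A, so the cycles of B are the cycles of A together with the basis paths
  of A between e1 and en, and the coordinates of B can be read off those of A. The
  old cycles keep their span and live on the pairs a || p with p parallel to a in A; the new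
  ones avoid these pairs and have pairwise disjoint supports, so they contribute sp(1,n).
  On the trivial paths, gluing replaces the images of e1 and en by their sum, which
  lowers the rank by one exactly when e1 and en lie in one block, and it lowers the
  number of blocks by one exactly when they do not.\<close>

section \<open>Linear algebra of coordinate vectors\<close>

interpretation fs: vector_space "fscale :: 'k::field \<Rightarrow> ('x \<Rightarrow> 'k) \<Rightarrow> ('x \<Rightarrow> 'k)"
  by unfold_locales (auto simp: fscale_def fun_eq_iff algebra_simps)

context vector_space
begin

lemma dim_insert_finite:
  assumes "finite S"
  shows "dim (insert x S) = (if x \<in> span S then dim S else dim S + 1)"
proof (cases "x \<in> span S")
  case True
  then show ?thesis
    by (metis dim_span span_redundant)
next
  case False
  obtain B where B: "B \<subseteq> S" "independent B" "S \<subseteq> span B" "card B = dim S"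
    using basis_exists[of S] by blast
  have "finite B"
    using B(1) assms finite_subset by blast
  moreover have "x \<notin> B"
    using B(1) False span_base by blast
  moreover have "dim (insert x S) = card (insert x B)"
  proof (rule dim_unique)
    show "insert x B \<subseteq> insert x S" "insert x S \<subseteq> span (insert x B)"
      using B(1,3) span_mono[of B "insert x B"] by (auto intro: span_base)
    have "x \<notin> span B"
      using False B(1) span_mono by blast
    then show "independent (insert x B)"
      using B(2) by (rule independent_insertI)
  qed simp
  ultimately show ?thesis
    using False B(4) by simp
qed

end

context vector_space_pair
begin

lemma dim_image_eq_inj_on_span:
  assumes lf: "Vector_Spaces.linear s1 s2 f" and inj: "inj_on f (vs1.span S)"
  shows "vs2.dim (f ` S) = vs1.dim S"
proof -
  obtain B where B: "B \<subseteq> S" "vs1.independent B" "S \<subseteq> vs1.span B" "card B = vs1.dim S"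
    using vs1.basis_exists[of S] by blast
  have span_B: "vs1.span B = vs1.span S"
    using B(1,3) vs1.span_mono[of B S] vs1.span_minimal[of S "vs1.span B"] by auto
  have "vs2.span (f ` B) = vs2.span (f ` S)"
    using linear_span_image[OF lf] span_B by metis
  moreover have "vs2.independent (f ` B)"
    using linear_independent_injective_image[OF lf B(2)] inj span_B by simp
  moreover have "card (f ` B) = card B"
    using inj B(1) vs1.span_superset by (intro card_image) (auto intro: inj_on_subset)
  ultimately show ?thesis
    using vs2.dim_eq_card B(4) by metis
qed

end

lemma sum_fun_apply: "sum f S x = (\<Sum>v\<in>S. f v x)"
  by (induction S rule: infinite_finite_induct) auto

lemma span_vanishing_on:
  fixes S :: "('x \<Rightarrow> 'k::field) set"
  assumes "\<forall>v\<in>S. \<forall>x\<in>P. v x = 0" and "y \<in> fs.span S" and "x \<in> P"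
  shows "y x = 0"
proof -
  have "fs.subspace {y. \<forall>x\<in>P. y x = 0}"
    unfolding fs.subspace_def by (auto simp: fscale_def)
  then have "fs.span S \<subseteq> {y. \<forall>x\<in>P. y x = 0}"
    using assms(1) by (intro fs.span_minimal) auto
  then show ?thesis
    using assms(2,3) by auto
qed

lemma independent_Un_disjoint_supports:
  fixes S T :: "('x \<Rightarrow> 'k::field) set"
  assumes "fs.independent S" "fs.independent T"
    and S_supp: "\<And>v x. v \<in> S \<Longrightarrow> x \<notin> P \<Longrightarrow> v x = 0"
    and T_supp: "\<And>v x. v \<in> T \<Longrightarrow> x \<in> P \<Longrightarrow> v x = 0"
  shows "fs.independent (S \<union> T)"
  unfolding fs.independent_explicit_finite_subsets
proof (intro allI impI ballI)
  fix U u v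
  assume U: "U \<subseteq> S \<union> T" "finite U" and sum0: "(\<Sum>v\<in>U. fscale (u v) v) = 0" and "v \<in> U"
  define f1 where "f1 = (\<Sum>v\<in>U \<inter> S. fscale (u v) v)"
  define f2 where "f2 = (\<Sum>v\<in>U - S. fscale (u v) v)"
  have sum: "f1 + f2 = 0"
    using sum.Int_Diff[OF U(2), of "\<lambda>v. fscale (u v) v" S] sum0 unfolding f1_def f2_def by simp
  have f1_out: "f1 x = 0" if "x \<notin> P" for x
    unfolding f1_def sum_fun_apply fscale_def using S_supp[OF _ that] by (intro sum.neutral) auto
  have f2_in: "f2 x = 0" if "x \<in> P" for x
    unfolding f2_def sum_fun_apply fscale_def using T_supp[OF _ that] U(1) by (intro sum.neutral) auto
  have f1: "f1 = 0"
  proof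
    fix x
    show "f1 x = 0 x"
      using f1_out[of x] f2_in[of x] fun_cong[OF sum, of x] by (cases "x \<in> P") auto
  qed
  then have f2: "f2 = 0"
    using sum by simp
  show "u v = 0"
  proof (cases "v \<in> S")
    case True
    then have "U \<inter> S \<subseteq> S" "finite (U \<inter> S)" "v \<in> U \<inter> S"
      using U(2) \<open>v \<in> U\<close> by auto
    then show ?thesis
      using assms(1) f1 unfolding f1_def fs.independent_explicit_finite_subsets by blast
  next
    case False
    then have "U - S \<subseteq> T" "finite (U - S)" "v \<in> U - S"
      using U \<open>v \<in> U\<close> by auto
    then show ?thesis
      using assms(2) f2 unfolding f2_def fs.independent_explicit_finite_subsets by blast
  qed
qed

lemma dim_Un_disjoint_supports:
  fixes S T :: "('x \<Rightarrow> 'k::field) set"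
  assumes "finite S" "finite T"
    and S_supp: "\<And>v x. v \<in> S \<Longrightarrow> x \<notin> P \<Longrightarrow> v x = 0"
    and T_supp: "\<And>v x. v \<in> T \<Longrightarrow> x \<in> P \<Longrightarrow> v x = 0"
  shows "fs.dim (S \<union> T) = fs.dim S + fs.dim T"
proof -
  obtain BS where BS: "BS \<subseteq> S" "fs.independent BS" "S \<subseteq> fs.span BS" "card BS = fs.dim S"
    using fs.basis_exists[of S] by blast
  obtain BT where BT: "BT \<subseteq> T" "fs.independent BT" "T \<subseteq> fs.span BT" "card BT = fs.dim T"
    using fs.basis_exists[of T] by blast
  have "BS \<inter> BT = {}"
  proof (rule ccontr)
    assume "BS \<inter> BT \<noteq> {}"
    then obtain v where v: "v \<in> BS" "v \<in> BT" by auto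
    then have "v = 0"
      using S_supp[of v] T_supp[of v] BS(1) BT(1) by (auto simp: fun_eq_iff)
    then show False
      using v(1) BS(2) fs.dependent_zero by blast
  qed
  moreover have "finite BS" "finite BT"
    using BS(1) BT(1) assms(1,2) finite_subset by auto
  moreover have "fs.independent (BS \<union> BT)"
    using BS(1,2) BT(1,2) S_supp T_supp by (intro independent_Un_disjoint_supports[where P = P]) auto
  moreover have "fs.span (BS \<union> BT) = fs.span (S \<union> T)"
    unfolding fs.span_eq
    using BS(1,3) BT(1,3) fs.span_mono[of BS "BS \<union> BT"] fs.span_mono[of BT "BS \<union> BT"]
      fs.span_superset[of "S \<union> T"] by blast
  ultimately show ?thesis
    using fs.dim_eq_card BS(4) BT(4) by (metis card_Un_disjoint)
qed

lemma dim_eq_card_disjoint_supports: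
  fixes T :: "('x \<Rightarrow> 'k::field) set"
  assumes "0 \<notin> T" and "\<And>u w x. u \<in> T \<Longrightarrow> w \<in> T \<Longrightarrow> u \<noteq> w \<Longrightarrow> u x = 0 \<or> w x = 0"
  shows "fs.dim T = card T"
proof -
  have "fs.independent T"
    unfolding fs.independent_explicit_finite_subsets
  proof (intro allI impI ballI)
    fix U u w
    assume U: "U \<subseteq> T" "finite U" and sum0: "(\<Sum>v\<in>U. fscale (u v) v) = 0" and w: "w \<in> U"
    have "w \<noteq> 0"
      using assms(1) w U(1) by auto
    then obtain x where x: "w x \<noteq> 0"
      by (auto simp: fun_eq_iff)
    have "0 = (\<Sum>v\<in>U. u v * v x)"
      using sum0 by (simp add: sum_fun_apply fscale_def fun_eq_iff)
    also have "\<dots> = u w * w x + (\<Sum>v\<in>U - {w}. u v * v x)"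
      using U(2) w by (simp add: sum.remove)
    also have "(\<Sum>v\<in>U - {w}. u v * v x) = 0"
      using assms(2)[of w _ x] x U(1) w by (intro sum.neutral) auto
    finally show "u w = 0"
      using x by simp
  qed
  then show ?thesis
    by (rule fs.dim_eq_card_independent)
qed

lemma dim_extend_by_zero:
  fixes S :: "('x \<Rightarrow> 'k::field) set" and h :: "'y \<Rightarrow> 'x"
  assumes supp: "\<And>v x. v \<in> S \<Longrightarrow> v x \<noteq> 0 \<Longrightarrow> x \<in> h ` Collect D"
  shows "fs.dim ((\<lambda>f y. if D y then f (h y) else 0) ` S) = fs.dim S"
proof -
  interpret vector_space_pair "fscale :: 'k \<Rightarrow> ('x \<Rightarrow> 'k) \<Rightarrow> _" "fscale :: 'k \<Rightarrow> ('y \<Rightarrow> 'k) \<Rightarrow> _"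
    by unfold_locales
  let ?F = "\<lambda>(f :: 'x \<Rightarrow> 'k) y. if D y then f (h y) else 0"
  have "Vector_Spaces.linear fscale fscale ?F"
    unfolding linear_iff
  proof (intro conjI allI)
    show "vector_space (fscale :: 'k \<Rightarrow> ('x \<Rightarrow> 'k) \<Rightarrow> _)" "vector_space (fscale :: 'k \<Rightarrow> ('y \<Rightarrow> 'k) \<Rightarrow> _)"
      by (fact fs.vector_space_axioms)+
  qed (simp_all add: fun_eq_iff fscale_def)
  moreover have "inj_on ?F (fs.span S)"
  proof (rule inj_onI, rule ext)
    fix f f' x
    assume f: "f \<in> fs.span S" and f': "f' \<in> fs.span S" and eq: "?F f = ?F f'"
    show "f x = f' x"
    proof (cases "x \<in> h ` Collect D")
      case True
      then obtain y where "D y" "x = h y"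
        by blast
      then show ?thesis
        using fun_cong[OF eq, of y] by simp
    next
      case False
      have vanish: "\<forall>v\<in>S. \<forall>z\<in>- h ` Collect D. v z = 0"
        using supp by blast
      show ?thesis
        using span_vanishing_on[of S "- h ` Collect D", OF vanish f]
          span_vanishing_on[of S "- h ` Collect D", OF vanish f'] False by simp
    qed
  qed
  ultimately show ?thesis
    by (rule dim_image_eq_inj_on_span)
qed

section \<open>Connectivity\<close>

lemma conn_rel_refl [simp]: "(x, x) \<in> conn_rel Q1 s t"
  by (simp add: conn_rel_def)

lemma conn_rel_edge: "a \<in> Q1 \<Longrightarrow> (s a, t a) \<in> conn_rel Q1 s t"
  unfolding conn_rel_def by blast

lemma conn_rel_trans: "(x, y) \<in> conn_rel Q1 s t \<Longrightarrow> (y, z) \<in> conn_rel Q1 s t \<Longrightarrow> (x, z) \<in> conn_rel Q1 s t"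
  unfolding conn_rel_def by (rule rtrancl_trans)

lemma sym_conn_rel: "sym (conn_rel Q1 s t)"
  unfolding conn_rel_def by (rule sym_rtrancl) (auto simp: sym_def)

lemma conn_rel_sym: "(x, y) \<in> conn_rel Q1 s t \<Longrightarrow> (y, x) \<in> conn_rel Q1 s t"
  using sym_conn_rel by (rule symD)

lemma conn_rel_class_eq_iff: "conn_rel Q1 s t `` {x} = conn_rel Q1 s t `` {y} \<longleftrightarrow> (x, y) \<in> conn_rel Q1 s t"
proof -
  have "equiv UNIV (conn_rel Q1 s t)"
    using sym_conn_rel unfolding conn_rel_def by (simp add: equiv_def refl_rtrancl trans_rtrancl)
  then show ?thesis
    by (simp add: eq_equiv_class_iff)
qed

lemma conn_rel_invariant:
  assumes "\<forall>a\<in>Q1. c (s a) = c (t a)" and "(x, y) \<in> conn_rel Q1 s t"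
  shows "c x = c y"
  using assms(2) unfolding conn_rel_def
proof (induction rule: rtrancl_induct)
  case (step y z)
  then show ?case
    using assms(1) by auto
qed simp

lemma conn_rel_map:
  assumes "\<forall>a\<in>Q1. (f (s a), f (t a)) \<in> conn_rel Q1' s' t'" and "(x, y) \<in> conn_rel Q1 s t"
  shows "(f x, f y) \<in> conn_rel Q1' s' t'"
  using assms(2) unfolding conn_rel_def[of Q1 s t]
proof (induction rule: rtrancl_induct)
  case (step y z)
  then obtain a where "a \<in> Q1" "(y, z) = (s a, t a) \<or> (y, z) = (t a, s a)"
    by blast
  then have "(f y, f z) \<in> conn_rel Q1' s' t'"
    using assms(1) by (auto intro: conn_rel_sym)
  with step.IH show ?case
    by (rule conn_rel_trans)
qed simp

lemma conn_rel_path: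
  assumes "set l \<subseteq> Q1" and "\<forall>i. Suc i < length l \<longrightarrow> t (l ! i) = s (l ! Suc i)" and "l \<noteq> []"
  shows "(s (hd l), t (last l)) \<in> conn_rel Q1 s t"
  using assms
proof (induction l)
  case (Cons a l)
  show ?case
  proof (cases "l = []")
    case False
    have "t a = s (hd l)"
      using Cons.prems(2) False by (auto simp: hd_conv_nth)
    moreover have "(s (hd l), t (last l)) \<in> conn_rel Q1 s t"
      using Cons False by (metis Suc_less_eq insert_subset length_Cons list.set(2) nth_Cons_Suc)
    ultimately show ?thesis
      using conn_rel_edge[of a Q1 s t] Cons.prems(1) False by (auto intro: conn_rel_trans)
  qed (use Cons.prems conn_rel_edge in auto)
qed simp

lemma card_image_eq_if_same_kernel:
  assumes "\<And>x y. x \<in> A \<Longrightarrow> y \<in> A \<Longrightarrow> f x = f y \<longleftrightarrow> h x = h y"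
  shows "card (f ` A) = card (h ` A)"
proof -
  let ?P = "(\<lambda>x. (f x, h x)) ` A"
  have "inj_on fst ?P" "inj_on snd ?P"
    using assms by (auto simp: inj_on_def)
  moreover have "fst ` ?P = f ` A" "snd ` ?P = h ` A"
    by (auto simp: image_image)
  ultimately show ?thesis
    by (metis card_image)
qed

section \<open>Gluing two vertices of a monomial algebra\<close>

lemma sublist_pair_iff: "sublist [c, b] l \<longleftrightarrow> (\<exists>i. Suc i < length l \<and> l ! i = c \<and> l ! Suc i = b)"
proof
  assume "sublist [c, b] l"
  then obtain ps ss where "l = ps @ [c, b] @ ss"
    by (auto simp: sublist_def)
  then show "\<exists>i. Suc i < length l \<and> l ! i = c \<and> l ! Suc i = b"
    by (intro exI[of _ "length ps"]) (auto simp: nth_append)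
next
  assume "\<exists>i. Suc i < length l \<and> l ! i = c \<and> l ! Suc i = b"
  then obtain i where i: "Suc i < length l" "l ! i = c" "l ! Suc i = b"
    by blast
  then have "l = take i l @ [c, b] @ drop (Suc (Suc i)) l"
    by (metis Cons_nth_drop_Suc Suc_lessD append_Cons append_self_conv2 append_take_drop_id)
  then show "sublist [c, b] l"
    unfolding sublist_def by blast
qed

lemma delta0_apply:
  "delta0 Q0 Q1 s t Z (e, \<gamma>) (a, p) =
     of_bool (a \<in> Q1 \<and> s a = e \<and> p = (fst \<gamma>, snd \<gamma> @ [a]) \<and> p \<in> basis_paths Q0 Q1 s t Z)
   - of_bool (a \<in> Q1 \<and> t a = e \<and> p = (s a, a # snd \<gamma>) \<and> p \<in> basis_paths Q0 Q1 s t Z)"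
  by (simp only: delta0_def of_bool_def prod.case)

type_synonym ('v, 'e) arrow_pair = "'e \<times> ('v, 'e) path"

locale vertex_gluing =
  fixes Q0 :: "'v set" and Q1 :: "'e set" and s t :: "'e \<Rightarrow> 'v"
    and Z :: "('v, 'e) path set" and v1 vn :: 'v
  assumes monomial: "monomial_presentation Q0 Q1 s t Z"
    and v1_in_Q0: "v1 \<in> Q0" and vn_in_Q0: "vn \<in> Q0" and v1_neq_vn: "v1 \<noteq> vn"
begin

abbreviation "g \<equiv> glue v1 vn"
abbreviation "sB \<equiv> g \<circ> s"
abbreviation "tB \<equiv> g \<circ> t"
abbreviation "ZB \<equiv> glue_rels Q1 s t Z v1 vn"

lemma finite_Q0: "finite Q0" and finite_Q1: "finite Q1"
  and arrow_ends_in_Q0: "a \<in> Q1 \<Longrightarrow> s a \<in> Q0 \<and> t a \<in> Q0"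
  using monomial unfolding monomial_presentation_def quiver_def by auto

lemma relation_length: "r \<in> Z \<Longrightarrow> 2 \<le> length (snd r)"
  using monomial unfolding monomial_presentation_def by auto

lemma glue_eq_iff: "g x = g y \<longleftrightarrow> x = y \<or> (x \<in> {v1, vn} \<and> y \<in> {v1, vn})"
  using v1_neq_vn by (auto simp: glue_def)

lemma glue_ends [simp]: "g v1 = v1" "g vn = v1"
  by (simp_all add: glue_def)

lemma glue_image_Q0: "g ` Q0 = Q0 - {vn}"
  using v1_in_Q0 v1_neq_vn by (auto simp: glue_def image_iff)

definition basis_word :: "'e list \<Rightarrow> bool" where
  "basis_word l \<longleftrightarrow> l \<noteq> [] \<and> (s (hd l), l) \<in> basis_paths Q0 Q1 s t Z"

lemma basis_word_iff:
  "basis_word l \<longleftrightarrow> l \<noteq> [] \<and> set l \<subseteq> Q1 \<and> (\<forall>i. Suc i < length l \<longrightarrow> t (l ! i) = s (l ! Suc i))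
     \<and> (\<forall>r\<in>Z. \<not> sublist (snd r) l)"
  using arrow_ends_in_Q0 hd_in_set
  unfolding basis_word_def basis_paths_def is_qpath_def subpath_def by fastforce

lemma basis_word_nonempty: "basis_word l \<Longrightarrow> l \<noteq> []"
  by (simp add: basis_word_def)

lemma basis_word_ends_in_Q0: "basis_word l \<Longrightarrow> s (hd l) \<in> Q0 \<and> t (last l) \<in> Q0"
  unfolding basis_word_iff using arrow_ends_in_Q0 hd_in_set last_in_set by blast

lemma basis_word_single [simp]: "basis_word [a] \<longleftrightarrow> a \<in> Q1"
  unfolding basis_word_iff using relation_length sublist_length_le by fastforce

lemma basis_word_snocD: "basis_word (l @ [a]) \<Longrightarrow> l \<noteq> [] \<Longrightarrow> a \<in> Q1 \<and> s a = t (last l)"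
  unfolding basis_word_iff
  by (auto simp: nth_append last_conv_nth dest: spec[of _ "length l - 1"])

lemma basis_word_ConsD: "basis_word (a # l) \<Longrightarrow> l \<noteq> [] \<Longrightarrow> a \<in> Q1 \<and> t a = s (hd l)"
  unfolding basis_word_iff by (auto simp: hd_conv_nth dest: spec[of _ 0])

lemma finite_basis_words: "finite {l. basis_word l}"
proof -
  obtain N where N: "\<forall>p. is_qpath Q0 Q1 s t p \<and> length (snd p) \<ge> N \<longrightarrow> (\<exists>r\<in>Z. subpath r p)"
    using monomial unfolding monomial_presentation_def by blast
  have "{l. basis_word l} \<subseteq> {l. set l \<subseteq> Q1 \<and> length l \<le> N}"
    using N unfolding basis_word_def basis_paths_def by (force simp: is_qpath_def)
  then show ?thesis
    using finite_lists_length_le[OF finite_Q1] by (rule finite_subset)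
qed

lemma basis_paths_Nil: "(v, []) \<in> basis_paths Q0 Q1 s t Z \<longleftrightarrow> v \<in> Q0"
  using relation_length unfolding basis_paths_def is_qpath_def subpath_def by fastforce

lemma basis_paths_nonempty:
  "l \<noteq> [] \<Longrightarrow> (v, l) \<in> basis_paths Q0 Q1 s t Z \<longleftrightarrow> v = s (hd l) \<and> basis_word l"
  unfolding basis_word_def basis_paths_def is_qpath_def by auto

lemma glued_basis_paths_Nil: "(v, []) \<in> basis_paths (g ` Q0) Q1 sB tB ZB \<longleftrightarrow> v \<in> g ` Q0"
  using relation_length unfolding basis_paths_def is_qpath_def subpath_def glue_rels_def by fastforce

text \<open>A spurious link is a pair of consecutive arrows that become composable only because
  their endpoints are identified; the relations of length two added by the gluing forbid
  exactly these.\<close>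

definition spurious_link :: "'e \<Rightarrow> 'e \<Rightarrow> bool" where
  "spurious_link c b \<longleftrightarrow> t c \<in> {v1, vn} \<and> s b \<in> {v1, vn} \<and> t c \<noteq> s b"

lemma avoids_glue_rels_iff:
  "(\<forall>r\<in>ZB. \<not> sublist (snd r) l) \<longleftrightarrow>
     (\<forall>r\<in>Z. \<not> sublist (snd r) l) \<and> (\<forall>b\<in>Q1. \<forall>c\<in>Q1. spurious_link c b \<longrightarrow> \<not> sublist [c, b] l)"
proof -
  have "(\<forall>r\<in>{(g (fst r), snd r) | r. r \<in> Z}. \<not> sublist (snd r) l) \<longleftrightarrow> (\<forall>r\<in>Z. \<not> sublist (snd r) l)"
    unfolding setcompr_eq_image by simp
  moreover have "(\<forall>r\<in>{(g (s c), [c, b]) | b c. b \<in> Q1 \<and> c \<in> Q1 \<and> spurious_link c b}. \<not> sublist (snd r) l)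
      \<longleftrightarrow> (\<forall>b\<in>Q1. \<forall>c\<in>Q1. spurious_link c b \<longrightarrow> \<not> sublist [c, b] l)"
    by auto
  ultimately show ?thesis
    unfolding glue_rels_def ball_Un spurious_link_def by (simp only:)
qed

lemma glued_links_iff:
  assumes "set l \<subseteq> Q1"
  shows "(\<forall>i. Suc i < length l \<longrightarrow> g (t (l ! i)) = g (s (l ! Suc i))) \<and>
      (\<forall>b\<in>Q1. \<forall>c\<in>Q1. spurious_link c b \<longrightarrow> \<not> sublist [c, b] l)
    \<longleftrightarrow> (\<forall>i. Suc i < length l \<longrightarrow> t (l ! i) = s (l ! Suc i))"
proof (intro iffI conjI allI impI ballI)
  fix i
  assume i: "Suc i < length l" and
    links: "(\<forall>i. Suc i < length l \<longrightarrow> g (t (l ! i)) = g (s (l ! Suc i))) \<and>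
      (\<forall>b\<in>Q1. \<forall>c\<in>Q1. spurious_link c b \<longrightarrow> \<not> sublist [c, b] l)"
  then have "l ! i \<in> Q1" "l ! Suc i \<in> Q1" "sublist [l ! i, l ! Suc i] l"
    using assms by (auto simp: sublist_pair_iff)
  then show "t (l ! i) = s (l ! Suc i)"
    using links i glue_eq_iff unfolding spurious_link_def by blast
next
  fix b c
  assume "\<forall>i. Suc i < length l \<longrightarrow> t (l ! i) = s (l ! Suc i)" and "spurious_link c b"
  then show "\<not> sublist [c, b] l"
    by (auto simp: sublist_pair_iff spurious_link_def)
qed simp

lemma glued_basis_paths_nonempty:
  assumes "l \<noteq> []"
  shows "(v, l) \<in> basis_paths (g ` Q0) Q1 sB tB ZB \<longleftrightarrow> v = g (s (hd l)) \<and> basis_word l"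
proof -
  have "(v, l) \<in> basis_paths (g ` Q0) Q1 sB tB ZB \<longleftrightarrow> v = g (s (hd l)) \<and> set l \<subseteq> Q1 \<and>
      (\<forall>i. Suc i < length l \<longrightarrow> g (t (l ! i)) = g (s (l ! Suc i))) \<and> (\<forall>r\<in>ZB. \<not> sublist (snd r) l)"
    using assms arrow_ends_in_Q0[of "hd l"] hd_in_set[OF assms]
    unfolding basis_paths_def is_qpath_def subpath_def by (auto simp: subset_iff)
  then show ?thesis
    unfolding basis_word_iff avoids_glue_rels_iff using assms glued_links_iff by blast
qed

definition vertex_vec :: "'v \<Rightarrow> ('v, 'e) arrow_pair \<Rightarrow> 'k::ring_1" where
  "vertex_vec v = (\<lambda>(a, w, p). if a \<in> Q1 \<and> p = [a] \<and> w = s a then of_bool (s a = v) - of_bool (t a = v) else 0)"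

definition cycle_vec :: "'e list \<Rightarrow> ('v, 'e) arrow_pair \<Rightarrow> 'k::ring_1" where
  "cycle_vec l = (\<lambda>(a, w, p).
     of_bool (p = l @ [a] \<and> w = s (hd l) \<and> basis_word (l @ [a]))
   - of_bool (p = a # l \<and> w = s a \<and> basis_word (a # l)))"

text \<open>A nonempty basis path of B is determined by its arrows, its start being the glued
  source of its first arrow; so a coordinate a || p of B is read off at the coordinate of A
  with the same arrows, and coordinates of B not of this form are 0.\<close>

definition transfer :: "(('v, 'e) arrow_pair \<Rightarrow> 'k) \<Rightarrow> ('v, 'e) arrow_pair \<Rightarrow> 'k::zero" where
  "transfer f = (\<lambda>(a, w, p). if p \<noteq> [] \<and> w = g (s (hd p)) then f (a, s (hd p), p) else 0)"

definition glued_vertex_vec :: "'v \<Rightarrow> ('v, 'e) arrow_pair \<Rightarrow> 'k::ring_1" where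
  "glued_vertex_vec v = (if v = v1 then vertex_vec v1 + vertex_vec vn else vertex_vec v)"

definition old_cycles :: "'e list set" where
  "old_cycles = {l. basis_word l \<and> t (last l) = s (hd l)}"

definition new_cycles :: "'e list set" where
  "new_cycles = {l. basis_word l \<and> (s (hd l), t (last l)) \<in> {(v1, vn), (vn, v1)}}"

lemma glued_cycle_iff:
  "l \<in> old_cycles \<union> new_cycles \<longleftrightarrow> basis_word l \<and> g (t (last l)) = g (s (hd l))"
  unfolding old_cycles_def new_cycles_def by (auto simp: glue_eq_iff)

lemma finite_old_cycles: "finite old_cycles"
  using finite_basis_words by (rule finite_subset[rotated]) (auto simp: old_cycles_def)

lemma finite_new_cycles: "finite new_cycles"
  using finite_basis_words by (rule finite_subset[rotated]) (auto simp: new_cycles_def)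

lemma delta0_trivial_path: "v \<in> Q0 \<Longrightarrow> delta0 Q0 Q1 s t Z (v, v, []) = vertex_vec v"
  unfolding fun_eq_iff
  by (auto simp: delta0_apply vertex_vec_def basis_paths_nonempty)

lemma delta0_old_cycle:
  assumes "l \<in> old_cycles"
  shows "delta0 Q0 Q1 s t Z (s (hd l), s (hd l), l) = cycle_vec l"
proof -
  have l: "basis_word l" "t (last l) = s (hd l)" "l \<noteq> []"
    using assms by (auto simp: old_cycles_def basis_word_nonempty)
  have "delta0 Q0 Q1 s t Z (s (hd l), s (hd l), l) (a, w, p) = cycle_vec l (a, w, p)" for a w p
  proof -
    have "a \<in> Q1 \<and> s a = s (hd l) \<and> (w, p) = (s (hd l), l @ [a]) \<and> (w, p) \<in> basis_paths Q0 Q1 s t Z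
        \<longleftrightarrow> p = l @ [a] \<and> w = s (hd l) \<and> basis_word (l @ [a])"
      using l basis_word_snocD[of l a] by (auto simp: basis_paths_nonempty)
    moreover have "a \<in> Q1 \<and> t a = s (hd l) \<and> (w, p) = (s a, a # l) \<and> (w, p) \<in> basis_paths Q0 Q1 s t Z
        \<longleftrightarrow> p = a # l \<and> w = s a \<and> basis_word (a # l)"
      using l basis_word_ConsD[of a l] by (auto simp: basis_paths_nonempty)
    ultimately show ?thesis
      by (simp add: delta0_apply cycle_vec_def)
  qed
  then show ?thesis
    unfolding fun_eq_iff split_paired_All by blast
qed

lemma transfer_cycle_vec:
  assumes "l \<noteq> []"
  shows "transfer (cycle_vec l) (a, w, p) =
     of_bool (p = l @ [a] \<and> w = g (s (hd l)) \<and> basis_word (l @ [a]))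
   - of_bool (p = a # l \<and> w = g (s a) \<and> basis_word (a # l))"
proof -
  let ?old = "p = l @ [a] \<and> w = g (s (hd l)) \<and> basis_word (l @ [a])"
  let ?new = "p = a # l \<and> w = g (s a) \<and> basis_word (a # l)"
  have unfold: "transfer (cycle_vec l) (a, w, p) = (if p \<noteq> [] \<and> w = g (s (hd p)) then
      of_bool (p = l @ [a] \<and> s (hd p) = s (hd l) \<and> basis_word (l @ [a]))
    - of_bool (p = a # l \<and> s (hd p) = s a \<and> basis_word (a # l)) else 0)"
    by (simp add: transfer_def cycle_vec_def)
  have hd_p: "p = l @ [a] \<Longrightarrow> hd p = hd l"
    using assms by simp
  show ?thesis
  proof (cases "p \<noteq> [] \<and> w = g (s (hd p))")
    case True
    then have "(p = l @ [a] \<and> s (hd p) = s (hd l) \<and> basis_word (l @ [a])) = ?old"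
      "(p = a # l \<and> s (hd p) = s a \<and> basis_word (a # l)) = ?new"
      using hd_p by auto
    then show ?thesis
      by (simp only: unfold if_P[OF True])
  next
    case False
    then have "?old = False" "?new = False"
      using hd_p assms by auto
    then show ?thesis
      by (simp only: unfold if_not_P[OF False] of_bool_eq(1) diff_self)
  qed
qed

lemma glued_vertex_vec_apply:
  assumes "v \<noteq> vn"
  shows "glued_vertex_vec v (a, w, p) =
    (if a \<in> Q1 \<and> p = [a] \<and> w = s a then of_bool (g (s a) = v) - of_bool (g (t a) = v) else 0)"
  using assms v1_neq_vn by (auto simp: glued_vertex_vec_def vertex_vec_def glue_def of_bool_def)

lemma glued_delta0_trivial_path:
  assumes "v \<in> Q0" and "v \<noteq> vn"
  shows "delta0 (g ` Q0) Q1 sB tB ZB (v, v, []) = transfer (glued_vertex_vec v)"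
proof -
  have "delta0 (g ` Q0) Q1 sB tB ZB (v, v, []) (a, w, p) = transfer (glued_vertex_vec v) (a, w, p)" for a w p
    using assms
    by (cases "a \<in> Q1 \<and> p = [a] \<and> w = g (s a)")
      (auto simp: delta0_apply glued_basis_paths_nonempty transfer_def glued_vertex_vec_apply)
  then show ?thesis
    unfolding fun_eq_iff split_paired_All by blast
qed

lemma glued_delta0_cycle:
  assumes "l \<in> old_cycles \<union> new_cycles"
  shows "delta0 (g ` Q0) Q1 sB tB ZB (g (s (hd l)), g (s (hd l)), l) = transfer (cycle_vec l)"
proof -
  have l: "basis_word l" "g (t (last l)) = g (s (hd l))" "l \<noteq> []"
    using assms glued_cycle_iff basis_word_nonempty by blast+
  have "delta0 (g ` Q0) Q1 sB tB ZB (g (s (hd l)), g (s (hd l)), l) (a, w, p) = transfer (cycle_vec l) (a, w, p)"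
    for a w p
  proof -
    have "a \<in> Q1 \<and> g (s a) = g (s (hd l)) \<and> (w, p) = (g (s (hd l)), l @ [a])
        \<and> (w, p) \<in> basis_paths (g ` Q0) Q1 sB tB ZB
        \<longleftrightarrow> p = l @ [a] \<and> w = g (s (hd l)) \<and> basis_word (l @ [a])"
      using l basis_word_snocD[of l a] by (auto simp: glued_basis_paths_nonempty)
    moreover have "a \<in> Q1 \<and> g (t a) = g (s (hd l)) \<and> (w, p) = (g (s a), a # l)
        \<and> (w, p) \<in> basis_paths (g ` Q0) Q1 sB tB ZB
        \<longleftrightarrow> p = a # l \<and> w = g (s a) \<and> basis_word (a # l)"
      using l basis_word_ConsD[of a l] by (auto simp: glued_basis_paths_nonempty)
    ultimately show ?thesis
      using l(3) by (simp add: delta0_apply transfer_cycle_vec)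
  qed
  then show ?thesis
    unfolding fun_eq_iff split_paired_All by blast
qed

lemma par0_eq:
  "par0 Q0 Q1 s t Z = (\<lambda>v. (v, v, [])) ` Q0 \<union> (\<lambda>l. (s (hd l), s (hd l), l)) ` old_cycles"
proof (intro set_eqI iffI)
  fix x
  assume "x \<in> par0 Q0 Q1 s t Z"
  then show "x \<in> (\<lambda>v. (v, v, [])) ` Q0 \<union> (\<lambda>l. (s (hd l), s (hd l), l)) ` old_cycles"
    by (cases "snd (snd x) = []")
      (auto simp: par0_def basis_paths_Nil basis_paths_nonempty qpath_tgt_def old_cycles_def)
qed (auto simp: par0_def basis_paths_Nil basis_paths_nonempty qpath_tgt_def old_cycles_def
    basis_word_nonempty basis_word_ends_in_Q0)

lemma glued_par0_eq:
  "par0 (g ` Q0) Q1 sB tB ZB =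
     (\<lambda>v. (v, v, [])) ` (Q0 - {vn}) \<union> (\<lambda>l. (g (s (hd l)), g (s (hd l)), l)) ` (old_cycles \<union> new_cycles)"
proof (intro set_eqI iffI)
  fix x
  assume x: "x \<in> par0 (g ` Q0) Q1 sB tB ZB"
  obtain e w p where x_eq: "x = (e, w, p)"
    by (cases x)
  show "x \<in> (\<lambda>v. (v, v, [])) ` (Q0 - {vn}) \<union> (\<lambda>l. (g (s (hd l)), g (s (hd l)), l)) ` (old_cycles \<union> new_cycles)"
  proof (cases "p = []")
    case True
    then show ?thesis
      using x glue_image_Q0 by (auto simp: x_eq par0_def qpath_tgt_def)
  next
    case False
    then have "e = g (s (hd p))" "w = g (s (hd p))" "basis_word p" "g (t (last p)) = g (s (hd p))"
      using x by (auto simp: x_eq par0_def glued_basis_paths_nonempty qpath_tgt_def)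
    then show ?thesis
      using glued_cycle_iff[of p] unfolding x_eq by blast
  qed
next
  fix x
  assume "x \<in> (\<lambda>v. (v, v, [])) ` (Q0 - {vn}) \<union> (\<lambda>l. (g (s (hd l)), g (s (hd l)), l)) ` (old_cycles \<union> new_cycles)"
  then consider (trivial) v where "v \<in> g ` Q0" "x = (v, v, [])"
    | (cycle) l where "basis_word l" "g (t (last l)) = g (s (hd l))" "x = (g (s (hd l)), g (s (hd l)), l)"
    unfolding glue_image_Q0 using glued_cycle_iff by blast
  then show "x \<in> par0 (g ` Q0) Q1 sB tB ZB"
  proof cases
    case trivial
    then show ?thesis
      by (simp add: par0_def glued_basis_paths_Nil qpath_tgt_def)
  next
    case cycle
    then show ?thesis
      using basis_word_nonempty basis_word_ends_in_Q0
      by (auto simp: par0_def glued_basis_paths_nonempty qpath_tgt_def)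
  qed
qed

lemma delta0_image:
  "(\<lambda>x. delta0 Q0 Q1 s t Z x :: _ \<Rightarrow> 'k::ring_1) ` par0 Q0 Q1 s t Z = vertex_vec ` Q0 \<union> cycle_vec ` old_cycles"
  unfolding par0_eq image_Un image_image
  by (simp add: delta0_trivial_path delta0_old_cycle cong: image_cong)

lemma glued_delta0_image:
  "(\<lambda>x. delta0 (g ` Q0) Q1 sB tB ZB x :: _ \<Rightarrow> 'k::ring_1) ` par0 (g ` Q0) Q1 sB tB ZB =
     (\<lambda>v. transfer (glued_vertex_vec v)) ` (Q0 - {vn}) \<union>
     ((\<lambda>l. transfer (cycle_vec l)) ` old_cycles \<union> (\<lambda>l. transfer (cycle_vec l)) ` new_cycles)"
proof -
  have "(\<lambda>v. delta0 (g ` Q0) Q1 sB tB ZB (v, v, []) :: _ \<Rightarrow> 'k) ` (Q0 - {vn}) =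
      (\<lambda>v. transfer (glued_vertex_vec v)) ` (Q0 - {vn})"
    by (rule image_cong) (auto simp: glued_delta0_trivial_path)
  moreover have "(\<lambda>l. delta0 (g ` Q0) Q1 sB tB ZB (g (s (hd l)), g (s (hd l)), l) :: _ \<Rightarrow> 'k) ` L =
      (\<lambda>l. transfer (cycle_vec l)) ` L" if "L \<subseteq> old_cycles \<union> new_cycles" for L
    using that by (intro image_cong) (auto simp: glued_delta0_cycle)
  ultimately show ?thesis
    unfolding glued_par0_eq image_Un image_image by auto
qed

lemma vertex_vec_nonzero: "vertex_vec v (a, w, p) \<noteq> 0 \<Longrightarrow> p = [a] \<and> w = s a"
  by (auto simp: vertex_vec_def split: if_splits)

lemma glued_vertex_vec_nonzero: "v \<noteq> vn \<Longrightarrow> glued_vertex_vec v (a, w, p) \<noteq> 0 \<Longrightarrow> p = [a] \<and> w = s a"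
  by (auto simp: glued_vertex_vec_apply split: if_splits)

lemma cycle_vec_nonzero:
  assumes "cycle_vec l (a, w, p) \<noteq> 0"
  shows "(p = l @ [a] \<and> w = s (hd l) \<and> basis_word (l @ [a])) \<or> (p = a # l \<and> w = s a \<and> basis_word (a # l))"
proof (rule ccontr)
  let ?old = "p = l @ [a] \<and> w = s (hd l) \<and> basis_word (l @ [a])"
  let ?new = "p = a # l \<and> w = s a \<and> basis_word (a # l)"
  assume "\<not> (?old \<or> ?new)"
  then have "?old = False" "?new = False"
    by blast+
  then have "cycle_vec l (a, w, p) = 0"
    by (simp only: cycle_vec_def prod.case of_bool_eq(1) diff_self)
  with assms show False
    by contradiction
qed

lemma transfer_nonzero: "transfer f (a, w, p) \<noteq> 0 \<Longrightarrow> p \<noteq> [] \<and> f (a, s (hd p), p) \<noteq> 0"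
  by (auto simp: transfer_def split: if_splits)

definition parallel_coords :: "('v, 'e) arrow_pair set" where
  "parallel_coords = {(a, w, p). p \<noteq> [] \<and> s (hd p) = s a \<and> t (last p) = t a}"

lemma old_cycle_vec_nonzero:
  assumes "l \<in> old_cycles" and "cycle_vec l y \<noteq> 0"
  shows "y \<in> parallel_coords"
proof -
  obtain a w p where y: "y = (a, w, p)"
    by (cases y)
  have l: "basis_word l" "t (last l) = s (hd l)" "l \<noteq> []"
    using assms(1) basis_word_nonempty by (auto simp: old_cycles_def)
  show ?thesis
    using cycle_vec_nonzero[of l a w p] assms(2) l basis_word_snocD[of l a] basis_word_ConsD[of a l]
    by (auto simp: y parallel_coords_def)
qed

lemma new_cycle_vec_nonzero:
  assumes "l \<in> new_cycles" and "cycle_vec l (a, w, p) \<noteq> 0"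
  shows "(p = l @ [a] \<and> s (hd p) \<noteq> s a) \<or> (p = a # l \<and> t (last p) \<noteq> t a)"
proof -
  have l: "basis_word l" "t (last l) \<noteq> s (hd l)" "l \<noteq> []"
    using assms(1) basis_word_nonempty v1_neq_vn by (auto simp: new_cycles_def)
  show ?thesis
    using cycle_vec_nonzero[OF assms(2)] l basis_word_snocD[of l a] basis_word_ConsD[of a l] by auto
qed

lemma new_cycle_vec_outside_parallel:
  "l \<in> new_cycles \<Longrightarrow> cycle_vec l y \<noteq> 0 \<Longrightarrow> y \<notin> parallel_coords"
  using new_cycle_vec_nonzero[of l] by (auto simp: parallel_coords_def)

lemma transfer_new_cycle_vecs_disjoint:
  assumes "l \<in> new_cycles" "m \<in> new_cycles"
    and "(transfer (cycle_vec l) y :: 'k::ring_1) \<noteq> 0" "(transfer (cycle_vec m) y :: 'k) \<noteq> 0"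
  shows "l = m"
proof -
  obtain a w p where y: "y = (a, w, p)"
    by (cases y)
  then have "(cycle_vec l (a, s (hd p), p) :: 'k) \<noteq> 0" "(cycle_vec m (a, s (hd p), p) :: 'k) \<noteq> 0"
    using assms(3,4) transfer_nonzero[of "cycle_vec l :: _ \<Rightarrow> 'k" a w p]
      transfer_nonzero[of "cycle_vec m :: _ \<Rightarrow> 'k" a w p]
    by simp_all
  then show ?thesis
    using new_cycle_vec_nonzero[OF assms(1)] new_cycle_vec_nonzero[OF assms(2)]
    by (metis append1_eq_conv list.sel(1,3))
qed

lemma transfer_cycle_vec_eq_0_iff:
  assumes "l \<noteq> []"
  shows "(transfer (cycle_vec l) :: _ \<Rightarrow> 'a::ring_1) = 0 \<longleftrightarrow>
    (\<forall>a w p. (p = l @ [a] \<and> w = g (s (hd l)) \<and> basis_word (l @ [a]))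
             \<longleftrightarrow> (p = a # l \<and> w = g (s a) \<and> basis_word (a # l)))"
  by (simp add: fun_eq_iff transfer_cycle_vec[OF assms] of_bool_eq_iff)

lemma dim_transfer:
  fixes S :: "(('v, 'e) arrow_pair \<Rightarrow> 'k::field) set"
  assumes "\<And>f a w p. f \<in> S \<Longrightarrow> f (a, w, p) \<noteq> 0 \<Longrightarrow> p \<noteq> [] \<and> w = s (hd p)"
  shows "fs.dim (transfer ` S) = fs.dim S"
proof -
  let ?D = "\<lambda>(a, w, p). p \<noteq> [] \<and> w = g (s (hd p))"
  let ?h = "\<lambda>(a, w :: 'v, p). (a, s (hd p), p)"
  have "(transfer :: (_ \<Rightarrow> 'k) \<Rightarrow> _) = (\<lambda>f y. if ?D y then f (?h y) else 0)"
    by (auto simp: fun_eq_iff transfer_def)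
  moreover have "fs.dim ((\<lambda>f y. if ?D y then f (?h y) else 0) ` S) = fs.dim S"
  proof (rule dim_extend_by_zero)
    fix f and y :: "('v, 'e) arrow_pair"
    assume "f \<in> S" "f y \<noteq> 0"
    then obtain a p where "y = (a, s (hd p), p)" "p \<noteq> []"
      using assms by (metis prod_cases3)
    then show "y \<in> ?h ` Collect ?D"
      by (intro image_eqI[of _ _ "(a, g (s (hd p)), p)"]) auto
  qed
  ultimately show ?thesis
    by simp
qed

lemma dim_delta0_image:
  "fs.dim ((\<lambda>x. delta0 Q0 Q1 s t Z x :: _ \<Rightarrow> 'k::field) ` par0 Q0 Q1 s t Z)
     = fs.dim (vertex_vec ` Q0 :: (_ \<Rightarrow> 'k) set) + fs.dim (cycle_vec ` old_cycles :: (_ \<Rightarrow> 'k) set)"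
  unfolding delta0_image
proof (rule dim_Un_disjoint_supports[where P = "{(a, w, p). length p = 1}"])
  fix f and y :: "('v, 'e) arrow_pair"
  assume "f \<in> (vertex_vec ` Q0 :: (_ \<Rightarrow> 'k) set)" "y \<notin> {(a, w, p). length p = 1}"
  then show "f y = 0"
    using vertex_vec_nonzero by (cases y) fastforce
next
  fix f and y :: "('v, 'e) arrow_pair"
  assume "f \<in> (cycle_vec ` old_cycles :: (_ \<Rightarrow> 'k) set)" "y \<in> {(a, w, p). length p = 1}"
  then show "f y = 0"
    using cycle_vec_nonzero basis_word_nonempty by (cases y) (fastforce simp: old_cycles_def)
qed (simp_all add: finite_Q0 finite_old_cycles)

lemma dim_glued_delta0_image:
  "fs.dim ((\<lambda>x. delta0 (g ` Q0) Q1 sB tB ZB x :: _ \<Rightarrow> 'k::field) ` par0 (g ` Q0) Q1 sB tB ZB)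
     = fs.dim ((\<lambda>v. transfer (glued_vertex_vec v)) ` (Q0 - {vn}) :: (_ \<Rightarrow> 'k) set)
     + fs.dim ((\<lambda>l. transfer (cycle_vec l)) ` old_cycles :: (_ \<Rightarrow> 'k) set)
     + fs.dim ((\<lambda>l. transfer (cycle_vec l)) ` new_cycles :: (_ \<Rightarrow> 'k) set)"
proof -
  let ?V = "(\<lambda>v. transfer (glued_vertex_vec v)) ` (Q0 - {vn}) :: (_ \<Rightarrow> 'k) set"
  let ?O = "(\<lambda>l. transfer (cycle_vec l)) ` old_cycles :: (_ \<Rightarrow> 'k) set"
  let ?N = "(\<lambda>l. transfer (cycle_vec l)) ` new_cycles :: (_ \<Rightarrow> 'k) set"
  have "fs.dim (?O \<union> ?N) = fs.dim ?O + fs.dim ?N"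
  proof (rule dim_Un_disjoint_supports[where P = parallel_coords])
    fix f and y :: "('v, 'e) arrow_pair"
    assume "f \<in> ?O" "y \<notin> parallel_coords"
    then show "f y = 0"
      using transfer_nonzero old_cycle_vec_nonzero by (cases y) (fastforce simp: parallel_coords_def)
  next
    fix f and y :: "('v, 'e) arrow_pair"
    assume "f \<in> ?N" "y \<in> parallel_coords"
    then show "f y = 0"
      using transfer_nonzero new_cycle_vec_outside_parallel by (cases y) (fastforce simp: parallel_coords_def)
  qed (simp_all add: finite_old_cycles finite_new_cycles)
  moreover have "fs.dim (?V \<union> (?O \<union> ?N)) = fs.dim ?V + fs.dim (?O \<union> ?N)"
  proof (rule dim_Un_disjoint_supports[where P = "{(a, w, p). length p = 1}"])
    fix f and y :: "('v, 'e) arrow_pair"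
    assume "f \<in> ?V" "y \<notin> {(a, w, p). length p = 1}"
    then show "f y = 0"
      using transfer_nonzero glued_vertex_vec_nonzero by (cases y) fastforce
  next
    fix f and y :: "('v, 'e) arrow_pair"
    assume "f \<in> ?O \<union> ?N" "y \<in> {(a, w, p). length p = 1}"
    then show "f y = 0"
      using transfer_nonzero cycle_vec_nonzero basis_word_nonempty glued_cycle_iff
      by (cases y) fastforce
  qed (simp_all add: finite_Q0 finite_old_cycles finite_new_cycles)
  ultimately show ?thesis
    unfolding glued_delta0_image by simp
qed

lemma dim_transfer_old_cycles:
  "fs.dim ((\<lambda>l. transfer (cycle_vec l)) ` old_cycles :: (_ \<Rightarrow> 'k::field) set)
     = fs.dim (cycle_vec ` old_cycles :: (_ \<Rightarrow> 'k) set)"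
proof -
  have "fs.dim (transfer ` cycle_vec ` old_cycles :: (_ \<Rightarrow> 'k) set) = fs.dim (cycle_vec ` old_cycles :: (_ \<Rightarrow> 'k) set)"
    by (rule dim_transfer) (use cycle_vec_nonzero basis_word_nonempty in \<open>fastforce simp: old_cycles_def\<close>)
  then show ?thesis
    by (simp add: image_image)
qed

lemma dim_transfer_glued_vertex_vecs:
  "fs.dim ((\<lambda>v. transfer (glued_vertex_vec v)) ` (Q0 - {vn}) :: (_ \<Rightarrow> 'k::field) set)
     = fs.dim (glued_vertex_vec ` (Q0 - {vn}) :: (_ \<Rightarrow> 'k) set)"
proof -
  have "fs.dim (transfer ` glued_vertex_vec ` (Q0 - {vn}) :: (_ \<Rightarrow> 'k) set)
      = fs.dim (glued_vertex_vec ` (Q0 - {vn}) :: (_ \<Rightarrow> 'k) set)"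
    by (rule dim_transfer) (use glued_vertex_vec_nonzero in fastforce)
  then show ?thesis
    by (simp add: image_image)
qed

lemma span_vertex_vecs:
  "fs.span (vertex_vec ` Q0 :: (_ \<Rightarrow> 'k::field) set)
     = fs.span (insert (vertex_vec v1) (glued_vertex_vec ` (Q0 - {vn})))"
proof -
  let ?G = "glued_vertex_vec ` (Q0 - {vn}) :: (_ \<Rightarrow> 'k) set"
  have glued_eq: "(glued_vertex_vec v :: _ \<Rightarrow> 'k) = vertex_vec v" if "v \<noteq> v1" for v
    using that by (simp add: glued_vertex_vec_def)
  have "glued_vertex_vec v1 - vertex_vec v1 \<in> fs.span (insert (vertex_vec v1) ?G)"
    using v1_in_Q0 v1_neq_vn by (intro fs.span_diff fs.span_base) auto
  then have vn_in: "vertex_vec vn \<in> fs.span (insert (vertex_vec v1) ?G)"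
    by (simp add: glued_vertex_vec_def)
  have "vertex_vec v1 + vertex_vec vn \<in> fs.span (vertex_vec ` Q0 :: (_ \<Rightarrow> 'k) set)"
    using v1_in_Q0 vn_in_Q0 by (intro fs.span_add fs.span_base) auto
  then have v1_in: "glued_vertex_vec v1 \<in> fs.span (vertex_vec ` Q0 :: (_ \<Rightarrow> 'k) set)"
    by (simp add: glued_vertex_vec_def)
  have "vertex_vec ` Q0 \<subseteq> fs.span (insert (vertex_vec v1) ?G)"
  proof (rule image_subsetI)
    fix v
    assume "v \<in> Q0"
    then consider "v = v1" | "v = vn" | "v \<in> Q0 - {vn}" "v \<noteq> v1"
      by blast
    then show "vertex_vec v \<in> fs.span (insert (vertex_vec v1) ?G)"
    proof cases
      case 3
      then have "glued_vertex_vec v \<in> insert (vertex_vec v1) ?G"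
        by blast
      then have "glued_vertex_vec v \<in> fs.span (insert (vertex_vec v1) ?G)"
        by (rule fs.span_base)
      then show ?thesis
        using glued_eq[of v] 3 by simp
    qed (use vn_in in \<open>auto intro: fs.span_base\<close>)
  qed
  moreover have "(glued_vertex_vec v :: _ \<Rightarrow> 'k) \<in> fs.span (vertex_vec ` Q0)" if "v \<in> Q0" for v
  proof (cases "v = v1")
    case False
    then show ?thesis
      using that glued_eq[OF False] by (simp add: fs.span_base)
  qed (simp add: v1_in)
  then have "insert (vertex_vec v1) ?G \<subseteq> fs.span (vertex_vec ` Q0)"
    using v1_in_Q0 by (auto intro: fs.span_base)
  ultimately show ?thesis
    unfolding fs.span_eq by blast
qed

text \<open>The glued vertex vectors are coboundaries of potentials d with d v1 = d vn (take for d
  the indicator of a glued vertex); the vertex vector of v1 is not if v1 and vn are connected,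
  as d minus the indicator of v1 would be constant along a walk from v1 to vn.\<close>

definition glued_coboundaries :: "(('v, 'e) arrow_pair \<Rightarrow> 'k::field) set" where
  "glued_coboundaries = {f. \<exists>d. d v1 = d vn \<and> (\<forall>a\<in>Q1. f (a, s a, [a]) = d (s a) - d (t a))}"

lemma subspace_glued_coboundaries: "fs.subspace (glued_coboundaries :: (_ \<Rightarrow> 'k::field) set)"
  unfolding fs.subspace_def
proof (intro conjI ballI allI)
  show "0 \<in> (glued_coboundaries :: (_ \<Rightarrow> 'k) set)"
    unfolding glued_coboundaries_def by (intro CollectI exI[of _ "\<lambda>_. 0"]) simp
next
  fix f f' :: "('v, 'e) arrow_pair \<Rightarrow> 'k"
  assume "f \<in> glued_coboundaries" "f' \<in> glued_coboundaries"
  then obtain d d' where "d v1 = d vn" "\<forall>a\<in>Q1. f (a, s a, [a]) = d (s a) - d (t a)"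
    "d' v1 = d' vn" "\<forall>a\<in>Q1. f' (a, s a, [a]) = d' (s a) - d' (t a)"
    unfolding glued_coboundaries_def by blast
  then show "f + f' \<in> glued_coboundaries"
    unfolding glued_coboundaries_def by (intro CollectI exI[of _ "\<lambda>v. d v + d' v"]) simp
next
  fix c :: 'k and f :: "('v, 'e) arrow_pair \<Rightarrow> 'k"
  assume "f \<in> glued_coboundaries"
  then obtain d where "d v1 = d vn" "\<forall>a\<in>Q1. f (a, s a, [a]) = d (s a) - d (t a)"
    unfolding glued_coboundaries_def by blast
  then show "fscale c f \<in> glued_coboundaries"
    unfolding glued_coboundaries_def
    by (intro CollectI exI[of _ "\<lambda>v. c * d v"]) (simp add: fscale_def right_diff_distrib)
qed

lemma glued_vertex_vec_in_glued_coboundaries: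
  "v \<in> Q0 - {vn} \<Longrightarrow> glued_vertex_vec v \<in> glued_coboundaries"
  unfolding glued_coboundaries_def
  by (intro CollectI exI[of _ "\<lambda>x. of_bool (g x = v)"]) (simp add: glued_vertex_vec_apply)

lemma vertex_vec_notin_glued_coboundaries:
  assumes "(v1, vn) \<in> conn_rel Q1 s t"
  shows "(vertex_vec v1 :: _ \<Rightarrow> 'k::field) \<notin> glued_coboundaries"
proof
  assume "(vertex_vec v1 :: _ \<Rightarrow> 'k) \<in> glued_coboundaries"
  then obtain d :: "'v \<Rightarrow> 'k" where d: "d v1 = d vn" "\<forall>a\<in>Q1. vertex_vec v1 (a, s a, [a]) = d (s a) - d (t a)"
    unfolding glued_coboundaries_def by blast
  have "\<forall>a\<in>Q1. d (s a) - of_bool (s a = v1) = d (t a) - of_bool (t a = v1)"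
  proof
    fix a
    assume "a \<in> Q1"
    then have "of_bool (s a = v1) - of_bool (t a = v1) = d (s a) - d (t a)"
      using d(2) by (simp add: vertex_vec_def)
    then show "d (s a) - of_bool (s a = v1) = d (t a) - of_bool (t a = v1)"
      by algebra
  qed
  then have "d v1 - of_bool (v1 = v1) = d vn - of_bool (vn = v1)"
    using assms by (rule conn_rel_invariant)
  then show False
    using d(1) v1_neq_vn by simp
qed

lemma vertex_vec_notin_span_if_connected:
  assumes "(v1, vn) \<in> conn_rel Q1 s t"
  shows "(vertex_vec v1 :: _ \<Rightarrow> 'k::field) \<notin> fs.span (glued_vertex_vec ` (Q0 - {vn}))"
proof -
  have "fs.span (glued_vertex_vec ` (Q0 - {vn})) \<subseteq> (glued_coboundaries :: (_ \<Rightarrow> 'k) set)"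
    using glued_vertex_vec_in_glued_coboundaries subspace_glued_coboundaries
    by (intro fs.span_minimal) auto
  then show ?thesis
    using vertex_vec_notin_glued_coboundaries[OF assms] by blast
qed

lemma sum_vertex_vecs_eq_0_if_closed:
  assumes "finite C" and closed: "\<And>a. a \<in> Q1 \<Longrightarrow> s a \<in> C \<longleftrightarrow> t a \<in> C"
  shows "(\<Sum>v\<in>C. vertex_vec v) = (0 :: _ \<Rightarrow> 'k::ring_1)"
proof
  fix y :: "('v, 'e) arrow_pair"
  obtain a w p where y: "y = (a, w, p)"
    by (cases y)
  have "(\<Sum>v\<in>C. vertex_vec v y) = (0 :: 'k)"
  proof (cases "a \<in> Q1 \<and> p = [a] \<and> w = s a")
    case True
    then have "(\<Sum>v\<in>C. vertex_vec v y) = (\<Sum>v\<in>C. of_bool (s a = v) - of_bool (t a = v) :: 'k)"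
      by (simp add: y vertex_vec_def)
    also have "\<dots> = of_bool (s a \<in> C) - of_bool (t a \<in> C)"
      using assms(1) by (simp add: sum_subtractf of_bool_def)
    finally show ?thesis
      using closed True by simp
  qed (use y in \<open>auto simp: vertex_vec_def intro: sum.neutral\<close>)
  then show "(\<Sum>v\<in>C. vertex_vec v) y = (0 :: _ \<Rightarrow> 'k) y"
    by (simp add: sum_fun_apply)
qed

lemma vertex_vec_in_span_if_disconnected:
  assumes "(v1, vn) \<notin> conn_rel Q1 s t"
  shows "(vertex_vec v1 :: _ \<Rightarrow> 'k::field) \<in> fs.span (glued_vertex_vec ` (Q0 - {vn}))"
proof -
  define C where "C = {v \<in> Q0. (v1, v) \<in> conn_rel Q1 s t}"
  have C: "finite C" "v1 \<in> C" "vn \<notin> C" "C \<subseteq> Q0"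
    using finite_Q0 v1_in_Q0 assms by (auto simp: C_def)
  have "s a \<in> C \<longleftrightarrow> t a \<in> C" if "a \<in> Q1" for a
  proof -
    have "(s a, t a) \<in> conn_rel Q1 s t" "(t a, s a) \<in> conn_rel Q1 s t"
      using conn_rel_edge[OF that] by (auto intro: conn_rel_sym)
    then show ?thesis
      using arrow_ends_in_Q0[OF that] conn_rel_trans[of v1 "s a" Q1 s t "t a"]
        conn_rel_trans[of v1 "t a" Q1 s t "s a"]
      unfolding C_def by blast
  qed
  then have "(\<Sum>v\<in>C. vertex_vec v) = (0 :: _ \<Rightarrow> 'k)"
    using C(1) by (intro sum_vertex_vecs_eq_0_if_closed)
  then have v1_eq: "vertex_vec v1 = - (\<Sum>v\<in>C - {v1}. vertex_vec v :: _ \<Rightarrow> 'k)"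
    using sum.remove[OF C(1,2), of "vertex_vec :: _ \<Rightarrow> _ \<Rightarrow> 'k"] by (simp add: eq_neg_iff_add_eq_0)
  have "(vertex_vec v :: _ \<Rightarrow> 'k) \<in> fs.span (glued_vertex_vec ` (Q0 - {vn}))" if "v \<in> C - {v1}" for v
    using that C(3,4) by (intro fs.span_base) (auto simp: glued_vertex_vec_def image_iff intro!: bexI[of _ v])
  then have "(\<Sum>v\<in>C - {v1}. vertex_vec v :: _ \<Rightarrow> 'k) \<in> fs.span (glued_vertex_vec ` (Q0 - {vn}))"
    by (rule fs.span_sum)
  then show ?thesis
    unfolding v1_eq by (rule fs.span_neg)
qed

lemma dim_vertex_vecs:
  "fs.dim (vertex_vec ` Q0 :: (_ \<Rightarrow> 'k::field) set)
     = fs.dim (glued_vertex_vec ` (Q0 - {vn}) :: (_ \<Rightarrow> 'k) set) + of_bool ((v1, vn) \<in> conn_rel Q1 s t)"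
proof -
  let ?G = "glued_vertex_vec ` (Q0 - {vn}) :: (_ \<Rightarrow> 'k) set"
  have "fs.dim (vertex_vec ` Q0 :: (_ \<Rightarrow> 'k) set) = fs.dim (insert (vertex_vec v1) ?G)"
    by (rule fs.span_eq_dim[OF span_vertex_vecs])
  also have "\<dots> = (if vertex_vec v1 \<in> fs.span ?G then fs.dim ?G else fs.dim ?G + 1)"
    using finite_Q0 by (intro fs.dim_insert_finite) simp
  finally show ?thesis
    using vertex_vec_notin_span_if_connected vertex_vec_in_span_if_disconnected
    by (cases "(v1, vn) \<in> conn_rel Q1 s t") auto
qed

lemma new_cycle_glued_start: "l \<in> new_cycles \<Longrightarrow> g (s (hd l)) = v1"
  unfolding new_cycles_def glue_def by auto

lemma glued_delta0_new_cycle: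
  "l \<in> new_cycles \<Longrightarrow> delta0 (g ` Q0) Q1 sB tB ZB (v1, v1, l) = transfer (cycle_vec l)"
  using glued_delta0_cycle[of l] new_cycle_glued_start[of l] by simp

lemma special_paths_iff:
  "(w, l) \<in> special_paths Q0 Q1 s t Z v1 vn
     \<longleftrightarrow> l \<in> new_cycles \<and> w = s (hd l) \<and> (transfer (cycle_vec l) :: _ \<Rightarrow> int) \<noteq> 0"
proof (cases "l = []")
  case True
  then show ?thesis
    using v1_neq_vn basis_word_nonempty by (auto simp: special_paths_def qpath_tgt_def new_cycles_def)
next
  case False
  then have "(w, l) \<in> special_paths Q0 Q1 s t Z v1 vn
      \<longleftrightarrow> l \<in> new_cycles \<and> w = s (hd l) \<and> (delta0 (g ` Q0) Q1 sB tB ZB (v1, v1, l) :: _ \<Rightarrow> int) \<noteq> 0"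
    unfolding special_paths_def new_cycles_def by (auto simp: basis_paths_nonempty qpath_tgt_def)
  moreover have "(delta0 (g ` Q0) Q1 sB tB ZB (v1, v1, l) :: _ \<Rightarrow> int) = transfer (cycle_vec l)"
    if "l \<in> new_cycles"
    using that by (rule glued_delta0_new_cycle)
  ultimately show ?thesis
    by auto
qed

lemma special_paths_eq:
  "special_paths Q0 Q1 s t Z v1 vn
     = (\<lambda>l. (s (hd l), l)) ` {l \<in> new_cycles. (transfer (cycle_vec l) :: _ \<Rightarrow> int) \<noteq> 0}"
proof (intro set_eqI)
  fix p :: "('v, 'e) path"
  obtain w l where "p = (w, l)"
    by (cases p)
  then show "p \<in> special_paths Q0 Q1 s t Z v1 vn
      \<longleftrightarrow> p \<in> (\<lambda>l. (s (hd l), l)) ` {l \<in> new_cycles. (transfer (cycle_vec l) :: _ \<Rightarrow> int) \<noteq> 0}"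
    by (auto simp: special_paths_iff)
qed

lemma dim_transfer_new_cycles:
  "fs.dim ((\<lambda>l. transfer (cycle_vec l)) ` new_cycles :: (_ \<Rightarrow> 'k::field) set)
     = card (special_paths Q0 Q1 s t Z v1 vn)"
proof -
  let ?T = "(\<lambda>l. transfer (cycle_vec l)) ` new_cycles :: (_ \<Rightarrow> 'k) set"
  let ?N = "{l \<in> new_cycles. (transfer (cycle_vec l) :: _ \<Rightarrow> int) \<noteq> 0}"
  have nonzero_iff: "(transfer (cycle_vec l) :: _ \<Rightarrow> 'k) \<noteq> 0 \<longleftrightarrow> (transfer (cycle_vec l) :: _ \<Rightarrow> int) \<noteq> 0"
    if "l \<in> new_cycles" for l
    using that basis_word_nonempty transfer_cycle_vec_eq_0_iff[where 'a = 'k] transfer_cycle_vec_eq_0_iff[where 'a = int]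
    by (simp add: new_cycles_def)
  have "fs.dim ?T = fs.dim (?T - {0})"
    by (rule fs.span_eq_dim[OF fs.span_delete_0[symmetric]])
  also have "\<dots> = card (?T - {0})"
    by (rule dim_eq_card_disjoint_supports) (use transfer_new_cycle_vecs_disjoint in blast)+
  also have "?T - {0} = (\<lambda>l. transfer (cycle_vec l)) ` ?N"
    using nonzero_iff by auto
  also have "card \<dots> = card ?N"
  proof (rule card_image, rule inj_onI)
    fix l m
    assume l: "l \<in> ?N" and m: "m \<in> ?N" and eq: "(transfer (cycle_vec l) :: _ \<Rightarrow> 'k) = transfer (cycle_vec m)"
    have "(transfer (cycle_vec l) :: _ \<Rightarrow> 'k) \<noteq> 0"
      using l nonzero_iff by blast
    then obtain y where "(transfer (cycle_vec l) y :: 'k) \<noteq> 0"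
      by (auto simp: fun_eq_iff)
    then show "l = m"
      using transfer_new_cycle_vecs_disjoint[where 'k = 'k, of l m y] l m eq by simp
  qed
  also have "\<dots> = card (special_paths Q0 Q1 s t Z v1 vn)"
    unfolding special_paths_eq by (rule card_image[symmetric]) (auto intro: inj_onI)
  finally show ?thesis .
qed

lemma basis_word_conn_rel: "basis_word l \<Longrightarrow> (s (hd l), t (last l)) \<in> conn_rel Q1 s t"
  unfolding basis_word_iff by (blast intro: conn_rel_path)

lemma no_new_cycles_if_disconnected:
  assumes "(v1, vn) \<notin> conn_rel Q1 s t"
  shows "new_cycles = {}"
proof -
  have "l \<notin> new_cycles" for l
  proof
    assume "l \<in> new_cycles"
    then have "(s (hd l), t (last l)) \<in> conn_rel Q1 s t" "(s (hd l), t (last l)) \<in> {(v1, vn), (vn, v1)}"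
      by (auto simp: new_cycles_def basis_word_conn_rel)
    then show False
      using assms by (auto dest: conn_rel_sym)
  qed
  then show ?thesis
    by blast
qed

definition glued_component :: "'v set" where
  "glued_component = {z. (z, v1) \<in> conn_rel Q1 s t \<or> (z, vn) \<in> conn_rel Q1 s t}"

lemma glue_conn_rel: "(x, y) \<in> conn_rel Q1 s t \<Longrightarrow> (g x, g y) \<in> conn_rel Q1 sB tB"
  by (rule conn_rel_map[where f = g]) (auto intro: conn_rel_edge[of _ Q1 sB tB, simplified])

lemma glued_conn_rel_iff:
  "(g x, g y) \<in> conn_rel Q1 sB tB
     \<longleftrightarrow> (x, y) \<in> conn_rel Q1 s t \<or> (x \<in> glued_component \<and> y \<in> glued_component)"
    (is "_ \<longleftrightarrow> ?P y")
proof
  define c where "c w \<longleftrightarrow> (\<exists>y. g y = w \<and> ?P y)" for w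
  have c_glue: "c (g u) \<longleftrightarrow> ?P u" for u
  proof
    assume "c (g u)"
    then obtain y where "g y = g u" "?P y"
      by (auto simp: c_def)
    then show "?P u"
      using glue_eq_iff[of y u]
      by (auto simp: glued_component_def conn_rel_class_eq_iff[symmetric])
  qed (auto simp: c_def)
  have "\<forall>a\<in>Q1. c (sB a) = c (tB a)"
  proof
    fix a
    assume "a \<in> Q1"
    then have "conn_rel Q1 s t `` {s a} = conn_rel Q1 s t `` {t a}"
      by (simp add: conn_rel_class_eq_iff conn_rel_edge)
    then show "c (sB a) = c (tB a)"
      by (simp add: c_glue glued_component_def conn_rel_class_eq_iff[symmetric])
  qed
  moreover assume "(g x, g y) \<in> conn_rel Q1 sB tB"
  ultimately have "c (g x) = c (g y)"
    by (rule conn_rel_invariant)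
  then show "?P y"
    using c_glue[of x] c_glue[of y] by simp
next
  have to_v1: "(g z, v1) \<in> conn_rel Q1 sB tB" if "z \<in> glued_component" for z
    using that glue_conn_rel[of z v1] glue_conn_rel[of z vn] by (auto simp: glued_component_def)
  assume "?P y"
  then show "(g x, g y) \<in> conn_rel Q1 sB tB"
  proof
    assume "x \<in> glued_component \<and> y \<in> glued_component"
    then show ?thesis
      using to_v1[of x] conn_rel_sym[OF to_v1[of y]] by (blast intro: conn_rel_trans)
  qed (rule glue_conn_rel)
qed

lemma ncomp_glue_if_connected:
  assumes "(v1, vn) \<in> conn_rel Q1 s t"
  shows "ncomp (g ` Q0) Q1 sB tB = ncomp Q0 Q1 s t"
proof -
  have "(g x, g y) \<in> conn_rel Q1 sB tB \<longleftrightarrow> (x, y) \<in> conn_rel Q1 s t" for x y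
    using assms unfolding glued_conn_rel_iff glued_component_def
    by (auto simp: conn_rel_class_eq_iff[symmetric])
  then have "conn_rel Q1 sB tB `` {g x} = conn_rel Q1 sB tB `` {g y}
      \<longleftrightarrow> conn_rel Q1 s t `` {x} = conn_rel Q1 s t `` {y}" for x y
    by (simp add: conn_rel_class_eq_iff)
  then have "card ((\<lambda>x. conn_rel Q1 sB tB `` {g x}) ` Q0) = card ((\<lambda>x. conn_rel Q1 s t `` {x}) ` Q0)"
    by (rule card_image_eq_if_same_kernel)
  then show ?thesis
    unfolding ncomp_def quotient_def by (simp add: image_image UNION_singleton_eq_range)
qed

lemma ncomp_glue_if_disconnected:
  assumes "(v1, vn) \<notin> conn_rel Q1 s t"
  shows "ncomp Q0 Q1 s t = ncomp (g ` Q0) Q1 sB tB + 1"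
proof -
  let ?class = "\<lambda>x. conn_rel Q1 s t `` {x}"
  let ?glued_class = "\<lambda>x. conn_rel Q1 sB tB `` {g x}"
  let ?Q0' = "{x \<in> Q0. ?class x \<noteq> ?class vn}"
  have "?class ` Q0 = insert (?class vn) (?class ` ?Q0')" and "?class vn \<notin> ?class ` ?Q0'"
    using vn_in_Q0 by auto
  then have card_A: "card (?class ` Q0) = card (?class ` ?Q0') + 1"
    using finite_Q0 by simp
  have glued_v1: "?glued_class x = ?glued_class v1" if "?class x = ?class vn" for x
    using that glued_conn_rel_iff[of x v1]
    by (simp add: conn_rel_class_eq_iff glued_component_def)
  have "v1 \<in> ?Q0'"
    using v1_in_Q0 assms by (simp add: conn_rel_class_eq_iff)
  then have "?glued_class ` Q0 \<subseteq> ?glued_class ` ?Q0'"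
    using glued_v1 by blast
  then have "?glued_class ` Q0 = ?glued_class ` ?Q0'"
    by blast
  moreover have "?glued_class x = ?glued_class y \<longleftrightarrow> ?class x = ?class y"
    if "x \<in> ?Q0'" "y \<in> ?Q0'" for x y
    using that unfolding conn_rel_class_eq_iff glued_conn_rel_iff glued_component_def
    by (auto simp: conn_rel_class_eq_iff[symmetric])
  then have "card (?glued_class ` ?Q0') = card (?class ` ?Q0')"
    by (rule card_image_eq_if_same_kernel)
  ultimately show ?thesis
    using card_A unfolding ncomp_def quotient_def by (simp add: image_image UNION_singleton_eq_range)
qed

lemma special_paths_if_disconnected:
  "(v1, vn) \<notin> conn_rel Q1 s t \<Longrightarrow> special_paths Q0 Q1 s t Z v1 vn = {}"
  by (simp add: special_paths_eq no_new_cycles_if_disconnected)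

lemma dim_im_delta0_glue:
  fixes K :: "'k::field itself"
  shows "dim_im_delta0 K Q0 Q1 s t Z + card (special_paths Q0 Q1 s t Z v1 vn)
     = dim_im_delta0 K (g ` Q0) Q1 sB tB ZB + of_bool ((v1, vn) \<in> conn_rel Q1 s t)"
  unfolding dim_im_delta0_def dim_delta0_image dim_glued_delta0_image dim_transfer_old_cycles
    dim_transfer_glued_vertex_vecs dim_transfer_new_cycles dim_vertex_vecs
  by simp

end

theorem proposition3p9:
  fixes K :: "'k::field itself"
    and Q0 :: "'v set" and Q1 :: "'e set" and s t :: "'e \<Rightarrow> 'v"
    and Z :: "('v, 'e) path set" and v1 vn :: 'v
  assumes "monomial_presentation Q0 Q1 s t Z"
    and "v1 \<in> Q0" and "vn \<in> Q0" and "v1 \<noteq> vn"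
    and "\<exists>a\<in>Q1. s a = v1 \<or> t a = v1"
    and "\<exists>a\<in>Q1. s a = vn \<or> t a = vn"
  defines "sB \<equiv> glue v1 vn \<circ> s" and "tB \<equiv> glue v1 vn \<circ> t"
    and "Q0B \<equiv> glue v1 vn ` Q0" and "ZB \<equiv> glue_rels Q1 s t Z v1 vn"
  shows "int (dim_im_delta0 K Q0 Q1 s t Z)
           = int (dim_im_delta0 K Q0B Q1 sB tB ZB) + 1 + int (ncomp Q0B Q1 sB tB)
             - int (ncomp Q0 Q1 s t) - int (card (special_paths Q0 Q1 s t Z v1 vn))
         \<and> ((v1, vn) \<in> conn_rel Q1 s t \<longrightarrow>
           int (dim_im_delta0 K Q0 Q1 s t Z)
           = int (dim_im_delta0 K Q0B Q1 sB tB ZB) + 1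
             - int (card (special_paths Q0 Q1 s t Z v1 vn)))
         \<and> ((v1, vn) \<notin> conn_rel Q1 s t \<longrightarrow>
           dim_im_delta0 K Q0 Q1 s t Z = dim_im_delta0 K Q0B Q1 sB tB ZB)"
proof -
  interpret vertex_gluing Q0 Q1 s t Z v1 vn
    using assms(1-4) by unfold_locales
  have dims: "dim_im_delta0 K Q0 Q1 s t Z + card (special_paths Q0 Q1 s t Z v1 vn)
      = dim_im_delta0 K Q0B Q1 sB tB ZB + of_bool ((v1, vn) \<in> conn_rel Q1 s t)"
    unfolding assms(7-10) by (rule dim_im_delta0_glue)
  show ?thesis
  proof (cases "(v1, vn) \<in> conn_rel Q1 s t")
    case True
    then show ?thesis
      using dims ncomp_glue_if_connected[OF True] unfolding assms(7-10) by simp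
  next
    case False
    then show ?thesis
      using dims ncomp_glue_if_disconnected[OF False] special_paths_if_disconnected[OF False]
      unfolding assms(7-10) by simp
  qed
qed

end
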